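(* For any valid threshold vector $t$, any sparsified weight vector $\tilde w$ and any integral assignment $\sigma:J\to[m]$, the optimal value of the linear program minimizing $\mathrm{LP}_t(\tilde w;x,y,z)$ subject to (OLB1)–(OLB5) is at most $\sum_{i=1}^m h_t(\tilde w;\mathrm{load}_\sigma(i))$.
   Context: Jobs $J$, machines $[m]$, processing times $p_{ij}\ge0$; $\mathrm{load}_\sigma(i)=\sum_{j:\sigma(j)=i}p_{ij}$. Fix $\delta>0$ and $P=\{\min\{\lceil(1+\delta)^s\rceil,m\}:s\in\mathbb{Z}_{\ge0}\}$; for $\ell\in P$, $\mathrm{next}(\ell)$ is the smallest element of $P$ larger than $\ell$ if $\ell<m$, and $\mathrm{next}(m)=m+1$. A threshold vector $t\in\mathbb{R}^P$ (with $t_{m+1}:=0$) is valid if $t_\ell\ge t_{\mathrm{next}(\ell)}$ for all $\ell\in P$. A sparsified weight vector $\tilde w$ arises from a non-increasing $w\in\mathbb{R}^m_{\ge0}$ by $\tilde w_i=w_i$ for $i\in P$ and $\tilde w_i=w_{\mathrm{next}(\ell)}$ for $\ell\in P$, $\ell<i<\mathrm{next}(\ell)$; $\tilde w_{m+1}:=0$. $h_t(\tilde w;a)=\sum_{\ell\in P}(\tilde w_\ell-\tilde w_{\mathrm{next}(\ell)})(a-t_\ell)^+$. Variables $x_{ij},z^{(\ell)}_{ij},y^{(\ell)}_{ij}\ge0$ ($i\in[m],j\in J,\ell\in P$), $z^{(m+1)}_{ij}:=0$. (OLB1) $\sum_ix_{ij}=1$; (OLB2) $x_{ij}=z^{(\ell)}_{ij}+y^{(\ell)}_{ij}$;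 (OLB3) $z^{(\mathrm{next}(\ell))}_{ij}\le z^{(\ell)}_{ij}$; (OLB4) $\sum_jp_{ij}(z^{(\ell)}_{ij}-z^{(\mathrm{next}(\ell))}_{ij})\le t_\ell-t_{\mathrm{next}(\ell)}$; (OLB5) $p_{ij}y^{(\ell)}_{ij}\ge(p_{ij}-t_\ell)x_{ij}$, all for all applicable $i,j,\ell$. Objective $\mathrm{LP}_t(\tilde w;x,y,z)=\sum_i\sum_{\ell\in P}\sum_j(\tilde w_\ell-\tilde w_{\mathrm{next}(\ell)})p_{ij}y^{(\ell)}_{ij}$. *)

theory Defs
  imports Complex_Main
begin

text \<open>Machines are 1..m, jobs a finite set J. Indices l range over the sparsified set P.\<close>

definition Pset :: "real \<Rightarrow> nat \<Rightarrow> nat set" where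
  "Pset \<delta> m = {min (nat \<lceil>(1 + \<delta>) ^ s\<rceil>) m | s::nat. True}"

definition nxt :: "real \<Rightarrow> nat \<Rightarrow> nat \<Rightarrow> nat" where
  "nxt \<delta> m l = (if l < m then Min {l' \<in> Pset \<delta> m. l < l'} else m + 1)"

definition ext0 :: "nat \<Rightarrow> (nat \<Rightarrow> real) \<Rightarrow> nat \<Rightarrow> real" where
  "ext0 m t l = (if l = m + 1 then 0 else t l)"

definition valid_threshold :: "real \<Rightarrow> nat \<Rightarrow> (nat \<Rightarrow> real) \<Rightarrow> bool" where
  "valid_threshold \<delta> m t \<longleftrightarrow> (\<forall>l \<in> Pset \<delta> m. t l \<ge> ext0 m t (nxt \<delta> m l))"

definition sparsify :: "real \<Rightarrow> nat \<Rightarrow> (nat \<Rightarrow> real) \<Rightarrow> nat \<Rightarrow> real" where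
  "sparsify \<delta> m w i =
     (if i = m + 1 then 0
      else if i \<in> Pset \<delta> m then w i
      else w (nxt \<delta> m (Max {l \<in> Pset \<delta> m. l < i})))"

definition load :: "'j set \<Rightarrow> (nat \<Rightarrow> 'j \<Rightarrow> real) \<Rightarrow> ('j \<Rightarrow> nat) \<Rightarrow> nat \<Rightarrow> real" where
  "load J p \<sigma> i = (\<Sum>j \<in> {j \<in> J. \<sigma> j = i}. p i j)"

definition h_fun :: "real \<Rightarrow> nat \<Rightarrow> (nat \<Rightarrow> real) \<Rightarrow> (nat \<Rightarrow> real) \<Rightarrow> real \<Rightarrow> real" where
  "h_fun \<delta> m t wt a =
     (\<Sum>l \<in> Pset \<delta> m. (wt l - wt (nxt \<delta> m l)) * max 0 (a - t l))"

text \<open>Feasibility for (OLB1)-(OLB5) plus nonnegativity; x i j, z l i j, y l i j.\<close>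
definition olb_feasible ::
  "real \<Rightarrow> nat \<Rightarrow> 'j set \<Rightarrow> (nat \<Rightarrow> 'j \<Rightarrow> real) \<Rightarrow> (nat \<Rightarrow> real)
   \<Rightarrow> (nat \<Rightarrow> 'j \<Rightarrow> real) \<Rightarrow> (nat \<Rightarrow> nat \<Rightarrow> 'j \<Rightarrow> real) \<Rightarrow> (nat \<Rightarrow> nat \<Rightarrow> 'j \<Rightarrow> real) \<Rightarrow> bool" where
  "olb_feasible \<delta> m J p t x y z \<longleftrightarrow>
     (let P = Pset \<delta> m; nx = nxt \<delta> m;
          zz = (\<lambda>l i j. if l = m + 1 then 0 else z l i j) in
     (\<forall>i \<in> {1..m}. \<forall>j \<in> J. x i j \<ge> 0) \<and>
     (\<forall>l \<in> P. \<forall>i \<in> {1..m}. \<forall>j \<in> J. z l i j \<ge> 0 \<and> y l i j \<ge> 0) \<and>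
     (\<forall>j \<in> J. (\<Sum>i \<in> {1..m}. x i j) = 1) \<and>
     (\<forall>l \<in> P. \<forall>i \<in> {1..m}. \<forall>j \<in> J. x i j = z l i j + y l i j) \<and>
     (\<forall>l \<in> P. \<forall>i \<in> {1..m}. \<forall>j \<in> J. zz (nx l) i j \<le> z l i j) \<and>
     (\<forall>l \<in> P. \<forall>i \<in> {1..m}.
        (\<Sum>j \<in> J. p i j * (z l i j - zz (nx l) i j)) \<le> t l - ext0 m t (nx l)) \<and>
     (\<forall>l \<in> P. \<forall>i \<in> {1..m}. \<forall>j \<in> J. p i j * y l i j \<ge> (p i j - t l) * x i j))"

definition LP_obj ::
  "real \<Rightarrow> nat \<Rightarrow> 'j set \<Rightarrow> (nat \<Rightarrow> 'j \<Rightarrow> real) \<Rightarrow> (nat \<Rightarrow> real)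
   \<Rightarrow> (nat \<Rightarrow> nat \<Rightarrow> 'j \<Rightarrow> real) \<Rightarrow> real" where
  "LP_obj \<delta> m J p wt y =
     (\<Sum>i \<in> {1..m}. \<Sum>l \<in> Pset \<delta> m. \<Sum>j \<in> J.
        (wt l - wt (nxt \<delta> m l)) * p i j * y l i j)"

end

theory Submission
  imports Defs
begin

text \<open>An integral assignment sigma induces a feasible LP solution: on a machine with load L,
  the fraction min 1 (t_l / L) of every job assigned there is put into z^(l) and the rest
  into y^(l). Then z^(l) carries exactly min L t_l units of processing time and y^(l) carries
  (L - t_l)^+, so the objective of this solution is the sum of the h-values of the loads.
  (OLB4) holds because min L t_l - min L t_next(l) <= t_l - t_next(l), and (OLB5) because no
  single job exceeds the load of its machine. The infimum is over a set bounded below by 0,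
  as the sparsified weights are non-increasing along next.\<close>

lemma Pset_le: "l \<in> Pset \<delta> m \<Longrightarrow> l \<le> m"
  unfolding Pset_def by auto

lemma finite_Pset: "finite (Pset \<delta> m)"
  using Pset_le by (meson finite_atMost finite_subset atMost_iff subsetI)

lemma Pset_subset:
  assumes "0 \<le> \<delta>" "1 \<le> m"
  shows "Pset \<delta> m \<subseteq> {1..m}"
proof
  fix l assume "l \<in> Pset \<delta> m"
  then obtain s :: nat where l: "l = min (nat \<lceil>(1 + \<delta>) ^ s\<rceil>) m"
    unfolding Pset_def by auto
  have "1 \<le> (1 + \<delta>) ^ s"
    using assms(1) by (simp add: one_le_power)
  then have "1 \<le> nat \<lceil>(1 + \<delta>) ^ s\<rceil>"
    by linarith
  then show "l \<in> {1..m}"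
    using l assms(2) by auto
qed

lemma m_in_Pset:
  assumes "0 < \<delta>"
  shows "m \<in> Pset \<delta> m"
proof -
  obtain s where "real m < (1 + \<delta>) ^ s"
    using real_arch_pow[of "1 + \<delta>" "real m"] assms by auto
  then have "m = min (nat \<lceil>(1 + \<delta>) ^ s\<rceil>) m"
    by linarith
  then show ?thesis
    unfolding Pset_def by blast
qed

lemma nxt_of_less:
  assumes "0 < \<delta>" "l < m"
  shows "nxt \<delta> m l \<in> Pset \<delta> m" "l < nxt \<delta> m l"
proof -
  let ?S = "{l' \<in> Pset \<delta> m. l < l'}"
  have "m \<in> ?S"
    using m_in_Pset[OF assms(1)] assms(2) by simp
  then have "Min ?S \<in> ?S"
    using finite_Pset by (intro Min_in) auto
  then show "nxt \<delta> m l \<in> Pset \<delta> m" "l < nxt \<delta> m l"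
    using assms(2) unfolding nxt_def by auto
qed

lemma nxt_m [simp]: "nxt \<delta> m m = m + 1"
  unfolding nxt_def by simp

lemma ext0_Pset [simp]: "l \<in> Pset \<delta> m \<Longrightarrow> ext0 m t l = t l"
  using Pset_le by (fastforce simp: ext0_def)

lemma valid_threshold_nonneg:
  assumes "0 < \<delta>" "valid_threshold \<delta> m t" "l \<in> Pset \<delta> m"
  shows "0 \<le> ext0 m t (nxt \<delta> m l)" "0 \<le> t l"
proof -
  have "0 \<le> ext0 m t (nxt \<delta> m l)" if "l \<in> Pset \<delta> m" "m - l = k" for k l
    using that
  proof (induction k arbitrary: l rule: less_induct)
    case (less k)
    show ?case
    proof (cases "l = m")
      case True
      then show ?thesis by (simp add: ext0_def)
    next
      case False
      with Pset_le[OF less.prems(1)] have "l < m" by simp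
      note next_l = nxt_of_less[OF assms(1) this]
      have "0 \<le> ext0 m t (nxt \<delta> m (nxt \<delta> m l))"
        using less.IH[OF _ next_l(1) refl] less.prems(2) next_l(2) Pset_le[OF next_l(1)] by simp
      also have "\<dots> \<le> ext0 m t (nxt \<delta> m l)"
        using assms(2) next_l(1) unfolding valid_threshold_def by simp
      finally show ?thesis .
    qed
  qed
  then show "0 \<le> ext0 m t (nxt \<delta> m l)"
    using assms(3) by blast
  then show "0 \<le> t l"
    using assms(2,3) unfolding valid_threshold_def by fastforce
qed

lemma sparsify_nxt_le:
  assumes "0 < \<delta>" "1 \<le> m" "l \<in> Pset \<delta> m"
    and "\<forall>i \<in> {1..m}. w i \<ge> 0"
    and "\<forall>i \<in> {1..m}. \<forall>i' \<in> {1..m}. i \<le> i' \<longrightarrow> w i' \<le> w i"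
  shows "sparsify \<delta> m w (nxt \<delta> m l) \<le> sparsify \<delta> m w l"
proof (cases "l = m")
  case True
  then show ?thesis
    using assms(2,4) by (simp add: sparsify_def m_in_Pset[OF assms(1)])
next
  case False
  with Pset_le[OF assms(3)] have "l < m" by simp
  note next_l = nxt_of_less[OF assms(1) this]
  have "1 \<le> l" "nxt \<delta> m l \<le> m"
    using Pset_subset[of \<delta> m] assms(1-3) Pset_le[OF next_l(1)] by auto
  then show ?thesis
    using assms(3,5) next_l by (simp add: sparsify_def)
qed

lemma LP_obj_nonneg:
  assumes "olb_feasible \<delta> m J p t x y z"
    and "\<forall>i \<in> {1..m}. \<forall>j \<in> J. p i j \<ge> 0"
    and "\<forall>l \<in> Pset \<delta> m. wt (nxt \<delta> m l) \<le> wt l"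
  shows "0 \<le> LP_obj \<delta> m J p wt y"
  unfolding LP_obj_def
proof (intro sum_nonneg)
  fix i l j assume "i \<in> {1..m}" "l \<in> Pset \<delta> m" "j \<in> J"
  moreover from this have "0 \<le> y l i j"
    using assms(1) unfolding olb_feasible_def Let_def by blast
  ultimately show "0 \<le> (wt l - wt (nxt \<delta> m l)) * p i j * y l i j"
    using assms(2,3) by simp
qed

text \<open>Since x / 0 = 0, the ratio for threshold 0 is 0 even on an empty machine; this makes the
  induced z^(m+1) vanish, as (OLB3) and (OLB4) require.\<close>

definition fill_ratio :: "real \<Rightarrow> real \<Rightarrow> real" where
  "fill_ratio L \<tau> = min 1 (\<tau> / L)"

lemma fill_ratio_bounds: "0 \<le> L \<Longrightarrow> 0 \<le> \<tau> \<Longrightarrow> 0 \<le> fill_ratio L \<tau> \<and> fill_ratio L \<tau> \<le> 1"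
  unfolding fill_ratio_def by simp

lemma fill_ratio_mono: "0 \<le> L \<Longrightarrow> \<tau> \<le> \<tau>' \<Longrightarrow> fill_ratio L \<tau> \<le> fill_ratio L \<tau>'"
  unfolding fill_ratio_def by (intro min.mono order.refl divide_right_mono)

lemma fill_ratio_mult: "0 \<le> L \<Longrightarrow> 0 \<le> \<tau> \<Longrightarrow> fill_ratio L \<tau> * L = min L \<tau>"
  unfolding fill_ratio_def by (cases "L = 0") (auto simp: min_def field_simps)

lemma mult_fill_ratio_le:
  assumes "0 \<le> q" "q \<le> L" "0 \<le> \<tau>"
  shows "q * fill_ratio L \<tau> \<le> \<tau>"
proof -
  have "q * fill_ratio L \<tau> \<le> L * fill_ratio L \<tau>"
    using assms fill_ratio_bounds[of L \<tau>] by (intro mult_right_mono) auto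
  also have "\<dots> \<le> \<tau>"
    using assms fill_ratio_mult[of L \<tau>] by (simp add: mult.commute)
  finally show ?thesis .
qed

definition induced_x :: "('j \<Rightarrow> nat) \<Rightarrow> nat \<Rightarrow> 'j \<Rightarrow> real" where
  "induced_x \<sigma> i j = (if \<sigma> j = i then 1 else 0)"

definition induced_z ::
  "nat \<Rightarrow> 'j set \<Rightarrow> (nat \<Rightarrow> 'j \<Rightarrow> real) \<Rightarrow> (nat \<Rightarrow> real) \<Rightarrow> ('j \<Rightarrow> nat) \<Rightarrow> nat \<Rightarrow> nat \<Rightarrow> 'j \<Rightarrow> real"
  where "induced_z m J p t \<sigma> l i j = fill_ratio (load J p \<sigma> i) (ext0 m t l) * induced_x \<sigma> i j"

definition induced_y ::
  "nat \<Rightarrow> 'j set \<Rightarrow> (nat \<Rightarrow> 'j \<Rightarrow> real) \<Rightarrow> (nat \<Rightarrow> real) \<Rightarrow> ('j \<Rightarrow> nat) \<Rightarrow> nat \<Rightarrow> nat \<Rightarrow> 'j \<Rightarrow> real"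
  where "induced_y m J p t \<sigma> l i j = (1 - fill_ratio (load J p \<sigma> i) (ext0 m t l)) * induced_x \<sigma> i j"

lemma load_eq_sum_induced_x: "finite J \<Longrightarrow> load J p \<sigma> i = (\<Sum>j \<in> J. p i j * induced_x \<sigma> i j)"
  unfolding load_def induced_x_def by (simp add: sum.inter_filter[symmetric] if_distrib cong: if_cong)

lemma load_nonneg: "\<forall>j \<in> J. 0 \<le> p i j \<Longrightarrow> 0 \<le> load J p \<sigma> i"
  unfolding load_def by (auto intro: sum_nonneg)

lemma le_load:
  assumes "finite J" "\<forall>j \<in> J. 0 \<le> p i j" "j \<in> J" "\<sigma> j = i"
  shows "p i j \<le> load J p \<sigma> i"
  unfolding load_def using assms by (intro member_le_sum) auto

lemma sum_induced_x: "\<sigma> j \<in> {1..m} \<Longrightarrow> (\<Sum>i \<in> {1..m}. induced_x \<sigma> i j) = 1"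
  unfolding induced_x_def by (simp add: sum.delta)

lemma sum_mult_induced_x:
  "finite J \<Longrightarrow> (\<Sum>j \<in> J. c * p i j * induced_x \<sigma> i j) = c * load J p \<sigma> i"
  by (simp add: load_eq_sum_induced_x sum_distrib_left mult.assoc)

lemma sum_induced_z_diff:
  assumes "finite J" "\<forall>j \<in> J. 0 \<le> p i j" "0 \<le> \<tau>" "0 \<le> \<tau>'"
  shows "(\<Sum>j \<in> J. p i j * (fill_ratio (load J p \<sigma> i) \<tau> * induced_x \<sigma> i j
                              - fill_ratio (load J p \<sigma> i) \<tau>' * induced_x \<sigma> i j))
         = min (load J p \<sigma> i) \<tau> - min (load J p \<sigma> i) \<tau>'"
proof -
  let ?L = "load J p \<sigma> i"
  have "(\<Sum>j \<in> J. p i j * (fill_ratio ?L \<tau> * induced_x \<sigma> i j - fill_ratio ?L \<tau>' * induced_x \<sigma> i j))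
        = (\<Sum>j \<in> J. (fill_ratio ?L \<tau> - fill_ratio ?L \<tau>') * p i j * induced_x \<sigma> i j)"
    by (intro sum.cong refl) (simp add: algebra_simps)
  also have "\<dots> = fill_ratio ?L \<tau> * ?L - fill_ratio ?L \<tau>' * ?L"
    unfolding sum_mult_induced_x[OF assms(1)] by (rule left_diff_distrib)
  finally show ?thesis
    using fill_ratio_mult load_nonneg[of J p i \<sigma>] assms(2-4) by simp
qed

lemma olb_feasible_induced:
  assumes "finite J" "0 < \<delta>"
    and p_nonneg: "\<forall>i \<in> {1..m}. \<forall>j \<in> J. p i j \<ge> 0"
    and valid: "valid_threshold \<delta> m t"
    and \<sigma>: "\<forall>j \<in> J. \<sigma> j \<in> {1..m}"
  shows "olb_feasible \<delta> m J p t (induced_x \<sigma>) (induced_y m J p t \<sigma>) (induced_z m J p t \<sigma>)"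
proof -
  let ?x = "induced_x \<sigma>" and ?y = "induced_y m J p t \<sigma>" and ?z = "induced_z m J p t \<sigma>"
  let ?L = "load J p \<sigma>" and ?n = "nxt \<delta> m"
  have z_ext: "(\<lambda>l i j. if l = m + 1 then 0 else ?z l i j) = ?z"
    by (intro ext) (simp add: induced_z_def ext0_def fill_ratio_def)
  have L_nonneg: "0 \<le> ?L i" if "i \<in> {1..m}" for i
    using p_nonneg that by (intro load_nonneg) auto
  note t_nonneg = valid_threshold_nonneg[OF assms(2) valid]
  have t_next_le: "ext0 m t (?n l) \<le> t l" if "l \<in> Pset \<delta> m" for l
    using valid that unfolding valid_threshold_def by blast
  have nonneg: "0 \<le> ?z l i j \<and> 0 \<le> ?y l i j" if "l \<in> Pset \<delta> m" "i \<in> {1..m}" for l i j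
    using fill_ratio_bounds[OF L_nonneg[OF that(2)] t_nonneg(2)[OF that(1)]] that(1)
    by (simp add: induced_z_def induced_y_def induced_x_def)
  have z_mono: "?z (?n l) i j \<le> ?z l i j" if "l \<in> Pset \<delta> m" "i \<in> {1..m}" for l i j
    using fill_ratio_mono[OF L_nonneg[OF that(2)] t_next_le[OF that(1)]] that(1)
    by (simp add: induced_z_def induced_x_def)
  have capacity: "(\<Sum>j \<in> J. p i j * (?z l i j - ?z (?n l) i j)) \<le> t l - ext0 m t (?n l)"
    if "l \<in> Pset \<delta> m" "i \<in> {1..m}" for l i
    using sum_induced_z_diff[OF assms(1), of p i "t l" "ext0 m t (?n l)" \<sigma>]
      p_nonneg t_nonneg[OF that(1)] t_next_le[OF that(1)] that
    by (simp add: induced_z_def)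
  have long_jobs: "p i j * ?y l i j \<ge> (p i j - t l) * ?x i j"
    if "l \<in> Pset \<delta> m" "i \<in> {1..m}" "j \<in> J" for l i j
  proof (cases "\<sigma> j = i")
    case True
    have "p i j \<le> ?L i"
      using assms(1) p_nonneg that(2,3) True by (intro le_load) auto
    then have "p i j * fill_ratio (?L i) (t l) \<le> t l"
      using mult_fill_ratio_le p_nonneg t_nonneg(2)[OF that(1)] that(2,3) by blast
    then show ?thesis
      using True that(1) by (simp add: induced_y_def induced_x_def algebra_simps)
  qed (simp add: induced_y_def induced_x_def)
  show ?thesis
    unfolding olb_feasible_def Let_def z_ext
    using nonneg z_mono capacity long_jobs sum_induced_x \<sigma>
    by (auto simp: induced_x_def induced_y_def induced_z_def algebra_simps)
qed

lemma LP_obj_induced: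
  assumes "finite J" "0 < \<delta>"
    and p_nonneg: "\<forall>i \<in> {1..m}. \<forall>j \<in> J. p i j \<ge> 0"
    and valid: "valid_threshold \<delta> m t"
  shows "LP_obj \<delta> m J p wt (induced_y m J p t \<sigma>) = (\<Sum>i \<in> {1..m}. h_fun \<delta> m t wt (load J p \<sigma> i))"
  unfolding LP_obj_def h_fun_def
proof (intro sum.cong refl)
  fix i l assume i: "i \<in> {1..m}" and l: "l \<in> Pset \<delta> m"
  let ?L = "load J p \<sigma> i" and ?c = "wt l - wt (nxt \<delta> m l)"
  have L_nonneg: "0 \<le> ?L"
    using p_nonneg i by (intro load_nonneg) auto
  have "(\<Sum>j \<in> J. ?c * p i j * induced_y m J p t \<sigma> l i j)
        = (\<Sum>j \<in> J. (?c * (1 - fill_ratio ?L (t l))) * p i j * induced_x \<sigma> i j)"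
    unfolding induced_y_def ext0_Pset[OF l] by (intro sum.cong refl) (simp add: mult_ac)
  also have "\<dots> = ?c * ((1 - fill_ratio ?L (t l)) * ?L)"
    by (simp add: sum_mult_induced_x[OF assms(1)])
  also have "(1 - fill_ratio ?L (t l)) * ?L = max 0 (?L - t l)"
    using fill_ratio_mult[OF L_nonneg valid_threshold_nonneg(2)[OF assms(2) valid l]]
    by (simp add: algebra_simps)
  finally show "(\<Sum>j \<in> J. ?c * p i j * induced_y m J p t \<sigma> l i j) = ?c * max 0 (?L - t l)" .
qed

theorem mainTheorem15:
  fixes J :: "'j set" and m :: nat and \<delta> :: real
    and p :: "nat \<Rightarrow> 'j \<Rightarrow> real" and t :: "nat \<Rightarrow> real"
    and w :: "nat \<Rightarrow> real" and \<sigma> :: "'j \<Rightarrow> nat"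
  assumes "finite J" and "m \<ge> 1" and "\<delta> > 0"
    and "\<forall>i \<in> {1..m}. \<forall>j \<in> J. p i j \<ge> 0"
    and "valid_threshold \<delta> m t"
    and "\<forall>i \<in> {1..m}. w i \<ge> 0"
    and "\<forall>i \<in> {1..m}. \<forall>i' \<in> {1..m}. i \<le> i' \<longrightarrow> w i' \<le> w i"
    and "\<forall>j \<in> J. \<sigma> j \<in> {1..m}"
  shows "Inf {LP_obj \<delta> m J p (sparsify \<delta> m w) y | x y z. olb_feasible \<delta> m J p t x y z}
           \<le> (\<Sum>i \<in> {1..m}. h_fun \<delta> m t (sparsify \<delta> m w) (load J p \<sigma> i))"
proof -
  let ?wt = "sparsify \<delta> m w"
  let ?values = "{LP_obj \<delta> m J p ?wt y | x y z. olb_feasible \<delta> m J p t x y z}"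
  have "LP_obj \<delta> m J p ?wt (induced_y m J p t \<sigma>) \<in> ?values"
    using olb_feasible_induced[OF assms(1,3-5,8)] by blast
  moreover have "bdd_below ?values"
    using LP_obj_nonneg[OF _ assms(4)] sparsify_nxt_le[OF assms(3,2) _ assms(6,7)]
    by (intro bdd_belowI[of _ 0]) blast
  ultimately have "Inf ?values \<le> LP_obj \<delta> m J p ?wt (induced_y m J p t \<sigma>)"
    by (rule cInf_lower)
  then show ?thesis
    using LP_obj_induced[OF assms(1,3-5)] by simp
qed

end
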